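(* In the setting described in the context, let \texttt{Orienteering} be a routine that solves the orienteering problem within constant factor $1/\lambda$ (with $\lambda\ge 1$): for any node weights $\nu(j)\ge 0$ it returns a path $\hat\rho\in\mathcal{X}(p_s,\omega)$ such that for every path $\rho\in\mathcal{X}(p_s,\omega)$, $$\sum_{j=1}^V \mathbb{I}_j(\hat{\rho})\nu(j) \ge \frac{1}{\lambda}\sum_{j=1}^V \mathbb{I}_j(\rho)\nu(j).$$ Let $c_j>0$ for $j=1,\dots,V$, and let $\hat\rho$ be the path returned by \texttt{Orienteering} with node weights $\nu(j)=\zeta_j c_j$. Then for every $\rho\in\mathcal{X}(p_s,\omega)$, $$\sum_{j=1}^Vc_j\,\mathbb{E}[z_j(\hat{\rho})] \ge \frac{p_s}{\lambda}\sum_{j=1}^V c_j\,\mathbb{E}[z_j(\rho)].$$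
   Context: Let $\mathcal{G}=(\mathcal{V},\mathcal{E})$ be a finite simple graph with node set $\mathcal{V}=\{1,\dots,V\}$ and edge weights $\omega:\mathcal{E}\to(0,1]$ (survival probabilities). A path $\rho$ is a sequence of nodes $\rho(0),\dots,\rho(\lvert\rho\rvert)$ with $(\rho(n-1),\rho(n))\in\mathcal{E}$ for each $n$. For a path $\rho$, let $s_n(\rho)$, $n=1,\dots,\lvert\rho\rvert$, be independent Bernoulli variables with $\mathbb{P}\{s_n(\rho)=1\}=\omega((\rho(n-1),\rho(n)))$, $a_n(\rho)=\prod_{i=1}^n s_i(\rho)$, and $z_j(\rho)=\max_{n=1,\dots,\lvert\rho\rvert} a_n(\rho)\,\mathbb{I}\{\rho(n)=j\}$. Let $\mathbb{I}_j(\rho)$ equal $1$ if $\rho(n)=j$ for some $n\in\{1,\dots,\lvert\rho\rvert\}$ and $0$ otherwise. Given start node $v_s$, terminal node $v_t$ and $p_s\in(0,1]$, $\mathcal{X}(p_s,\omega)$ is the (assumed nonempty) set of paths $\rho$ with $\rho(0)=v_s$, $\rho(\lvert\rho\rvert)=v_t$ and $\mathbb{P}\{a_{\lvert\rho\rvert}(\rho)=1\}\ge p_s$ (equivalently $\sum_{e\in\rho}-\log\omega(e)\le-\log p_s$). Define $\zeta_j=\max_{\rho\in\mathcal{X}(p_s,\omega)}\mathbb{E}[z_j(\rho)]$ (with $\zeta_j=0$ if no feasible path reaches $j$). *)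

theory Defs
  imports "HOL-Probability.Probability"
begin

text \<open>Finite simple graph on nodes 1..V: symmetric irreflexive edge set, edge weights
  (survival probabilities) in (0,1], symmetric in the endpoints.\<close>
definition simple_weighted_graph :: "nat \<Rightarrow> (nat \<times> nat) set \<Rightarrow> (nat \<Rightarrow> nat \<Rightarrow> real) \<Rightarrow> bool" where
  "simple_weighted_graph V E \<omega> \<longleftrightarrow>
     E \<subseteq> {1..V} \<times> {1..V} \<and>
     (\<forall>u v. (u, v) \<in> E \<longrightarrow> (v, u) \<in> E \<and> u \<noteq> v \<and> \<omega> u v = \<omega> v u \<and> 0 < \<omega> u v \<and> \<omega> u v \<le> 1)"

text \<open>A path is a nonempty list of nodes rho(0),...,rho(|rho|); its length |rho| is the number of edges.\<close>
definition plen :: "nat list \<Rightarrow> nat" where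
  "plen \<rho> = length \<rho> - 1"

definition is_path :: "(nat \<times> nat) set \<Rightarrow> nat list \<Rightarrow> bool" where
  "is_path E \<rho> \<longleftrightarrow> \<rho> \<noteq> [] \<and> (\<forall>n\<in>{1..plen \<rho>}. (\<rho> ! (n - 1), \<rho> ! n) \<in> E)"

text \<open>Joint law of the independent Bernoulli variables s_1(rho),...,s_|rho|(rho).\<close>
definition surv_pmf :: "(nat \<Rightarrow> nat \<Rightarrow> real) \<Rightarrow> nat list \<Rightarrow> (nat \<Rightarrow> bool) pmf" where
  "surv_pmf \<omega> \<rho> = Pi_pmf {1..plen \<rho>} False (\<lambda>n. bernoulli_pmf (\<omega> (\<rho> ! (n - 1)) (\<rho> ! n)))"

definition a_var :: "(nat \<Rightarrow> bool) \<Rightarrow> nat \<Rightarrow> real" where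
  "a_var s n = (\<Prod>i\<in>{1..n}. if s i then 1 else 0)"

text \<open>z_j(rho) = max_{n=1..|rho|} a_n(rho) I{rho(n)=j}  (taken as 0 for the trivial path |rho|=0)\<close>
definition z_var :: "nat list \<Rightarrow> nat \<Rightarrow> (nat \<Rightarrow> bool) \<Rightarrow> real" where
  "z_var \<rho> j s = Max (insert 0 ((\<lambda>n. a_var s n * (if \<rho> ! n = j then 1 else 0)) ` {1..plen \<rho>}))"

definition Ez :: "(nat \<Rightarrow> nat \<Rightarrow> real) \<Rightarrow> nat list \<Rightarrow> nat \<Rightarrow> real" where
  "Ez \<omega> \<rho> j = measure_pmf.expectation (surv_pmf \<omega> \<rho>) (z_var \<rho> j)"

definition surv_prob :: "(nat \<Rightarrow> nat \<Rightarrow> real) \<Rightarrow> nat list \<Rightarrow> real" where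
  "surv_prob \<omega> \<rho> = measure_pmf.prob (surv_pmf \<omega> \<rho>) {s. a_var s (plen \<rho>) = 1}"

definition feasible :: "(nat \<times> nat) set \<Rightarrow> (nat \<Rightarrow> nat \<Rightarrow> real) \<Rightarrow> nat \<Rightarrow> nat \<Rightarrow> real \<Rightarrow> nat list \<Rightarrow> bool" where
  "feasible E \<omega> vs vt ps \<rho> \<longleftrightarrow> is_path E \<rho> \<and> hd \<rho> = vs \<and> last \<rho> = vt \<and> surv_prob \<omega> \<rho> \<ge> ps"

definition visits :: "nat list \<Rightarrow> nat \<Rightarrow> real" where
  "visits \<rho> j = (if \<exists>n\<in>{1..plen \<rho>}. \<rho> ! n = j then 1 else 0)"

text \<open>zeta_j = max over feasible paths of E[z_j(rho)] (0 if none reaches j); values lie in [0,1],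
  and the maximum is attained, so it coincides with this supremum.\<close>
definition zeta :: "(nat \<times> nat) set \<Rightarrow> (nat \<Rightarrow> nat \<Rightarrow> real) \<Rightarrow> nat \<Rightarrow> nat \<Rightarrow> real \<Rightarrow> nat \<Rightarrow> real" where
  "zeta E \<omega> vs vt ps j = Sup (insert 0 ((\<lambda>\<rho>. Ez \<omega> \<rho> j) ` {\<rho>. feasible E \<omega> vs vt ps \<rho>}))"

end

theory Submission
  imports Defs
begin

text \<open>The weights \<open>\<nu> j = \<zeta> j * c j\<close> sandwich the objective between two multiples of the
  orienteering reward. From above, \<open>c j * E[z_j(\<rho>)] \<le> I_j(\<rho>) * \<nu> j\<close>, because \<open>E[z_j(\<rho>)] \<le> \<zeta> j\<close>
  and \<open>z_j(\<rho>)\<close> vanishes unless \<open>\<rho>\<close> visits \<open>j\<close>. From below, \<open>p_s * I_j(\<rho>) * \<nu> j \<le> c j * E[z_j(\<rho>)]\<close>,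
  because \<open>\<zeta> j \<le> 1\<close> and surviving the whole path, an event of probability at least \<open>p_s\<close>,
  implies reaching every node the path visits. Chaining the lower bound for the returned path,
  the \<open>\<lambda>\<close>-approximation guarantee and the upper bound for \<open>\<rho>\<close> gives the claim.\<close>

lemma a_var_eq: "a_var s n = (if \<forall>i\<in>{1..n}. s i then 1 else 0)"
proof (cases "\<forall>i\<in>{1..n}. s i")
  case True
  then have "a_var s n = (\<Prod>i\<in>{1..n}. (1::real))"
    unfolding a_var_def by (intro prod.cong) auto
  then show ?thesis using True by simp
next
  case False
  then obtain i where "i \<in> {1..n}" "\<not> s i" by auto
  then have "a_var s n = 0" unfolding a_var_def by (intro prod_zero) auto
  then show ?thesis using False by simp
qed

lemma a_var_antimono: "m \<le> n \<Longrightarrow> a_var s n \<le> a_var s m"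
  by (auto simp: a_var_eq)

lemma a_var_nonneg: "0 \<le> a_var s n"
  and a_var_le_one: "a_var s n \<le> 1"
  by (auto simp: a_var_eq)

lemma z_var_nonneg: "0 \<le> z_var \<rho> j s"
  and z_var_le_one: "z_var \<rho> j s \<le> 1"
  unfolding z_var_def by (auto simp: a_var_eq intro!: Max_ge Max.boundedI)

lemma integrable_measure_pmf_bounded:
  fixes f :: "'a \<Rightarrow> real"
  assumes "\<And>x. \<bar>f x\<bar> \<le> B"
  shows "integrable (measure_pmf p) f"
  by (rule measure_pmf.integrable_const_bound[where B = B]) (auto simp: assms)

lemma integrable_z_var: "integrable (measure_pmf p) (z_var \<rho> j)"
  by (rule integrable_measure_pmf_bounded[where B = 1]) (simp add: z_var_nonneg z_var_le_one)

lemma Ez_nonneg: "0 \<le> Ez \<omega> \<rho> j"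
  unfolding Ez_def by (rule integral_nonneg_AE) (simp add: z_var_nonneg)

lemma Ez_le_one: "Ez \<omega> \<rho> j \<le> 1"
proof -
  have "Ez \<omega> \<rho> j \<le> measure_pmf.expectation (surv_pmf \<omega> \<rho>) (\<lambda>_. 1)"
    unfolding Ez_def by (rule integral_mono) (auto simp: integrable_z_var z_var_le_one)
  then show ?thesis by simp
qed

lemma visits_eq_0_or_1: "visits \<rho> j = 0 \<or> visits \<rho> j = 1"
  unfolding visits_def by simp

lemma Ez_eq_0_if_not_visited:
  assumes "visits \<rho> j = 0"
  shows "Ez \<omega> \<rho> j = 0"
proof -
  have "\<forall>n\<in>{1..plen \<rho>}. \<rho> ! n \<noteq> j"
    using assms unfolding visits_def by (auto split: if_splits)
  then have "z_var \<rho> j = (\<lambda>_. 0)"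
    unfolding z_var_def by (intro ext antisym Max.boundedI) auto
  then show ?thesis unfolding Ez_def by simp
qed

lemma surv_prob_le_Ez_if_visited:
  assumes "visits \<rho> j = 1"
  shows "surv_prob \<omega> \<rho> \<le> Ez \<omega> \<rho> j"
proof -
  obtain n where n: "n \<in> {1..plen \<rho>}" "\<rho> ! n = j"
    using assms unfolding visits_def by (auto split: if_splits)
  have survive_le_z: "a_var s (plen \<rho>) \<le> z_var \<rho> j s" for s
  proof -
    have "a_var s (plen \<rho>) \<le> a_var s n" using n by (intro a_var_antimono) auto
    also have "\<dots> \<le> z_var \<rho> j s" unfolding z_var_def using n by (intro Max_ge) auto
    finally show ?thesis .
  qed
  have "(\<lambda>s. a_var s (plen \<rho>)) = indicator {s. a_var s (plen \<rho>) = 1}"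
    by (auto simp: a_var_eq indicator_def fun_eq_iff)
  then have "surv_prob \<omega> \<rho> = measure_pmf.expectation (surv_pmf \<omega> \<rho>) (\<lambda>s. a_var s (plen \<rho>))"
    unfolding surv_prob_def by simp
  also have "\<dots> \<le> Ez \<omega> \<rho> j"
    unfolding Ez_def
    by (rule integral_mono[OF integrable_measure_pmf_bounded[where B = 1] integrable_z_var])
      (auto simp: survive_le_z a_var_nonneg a_var_le_one)
  finally show ?thesis .
qed

lemma Ez_ge_visits:
  assumes "feasible E \<omega> vs vt ps \<rho>"
  shows "ps * visits \<rho> j \<le> Ez \<omega> \<rho> j"
  using visits_eq_0_or_1[of \<rho> j] surv_prob_le_Ez_if_visited[of \<rho> j \<omega>] assms
  by (auto simp: feasible_def Ez_nonneg)

lemma zeta_nonneg: "0 \<le> zeta E \<omega> vs vt ps j"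
  and zeta_le_one: "zeta E \<omega> vs vt ps j \<le> 1"
  and Ez_le_zeta: "feasible E \<omega> vs vt ps \<rho> \<Longrightarrow> Ez \<omega> \<rho> j \<le> zeta E \<omega> vs vt ps j"
proof -
  have bdd: "bdd_above (insert 0 ((\<lambda>\<rho>. Ez \<omega> \<rho> j) ` {\<rho>. feasible E \<omega> vs vt ps \<rho>}))"
    by (rule bdd_aboveI[where M = 1]) (auto simp: Ez_le_one)
  show "0 \<le> zeta E \<omega> vs vt ps j"
    unfolding zeta_def by (rule cSup_upper[OF _ bdd]) simp
  show "zeta E \<omega> vs vt ps j \<le> 1"
    unfolding zeta_def by (rule cSup_least) (auto simp: Ez_le_one)
  show "feasible E \<omega> vs vt ps \<rho> \<Longrightarrow> Ez \<omega> \<rho> j \<le> zeta E \<omega> vs vt ps j"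
    unfolding zeta_def by (rule cSup_upper[OF _ bdd]) simp
qed

lemma weighted_Ez_le_visits_zeta:
  assumes "feasible E \<omega> vs vt ps \<rho>" and "0 \<le> c"
  shows "c * Ez \<omega> \<rho> j \<le> visits \<rho> j * (zeta E \<omega> vs vt ps j * c)"
  using visits_eq_0_or_1[of \<rho> j] Ez_eq_0_if_not_visited[of \<rho> j \<omega>]
    Ez_le_zeta[OF assms(1), of j] assms(2)
  by (auto simp: mult.commute mult_left_mono)

lemma visits_zeta_le_weighted_Ez:
  assumes "feasible E \<omega> vs vt ps \<rho>" and "0 \<le> c" and "0 \<le> ps"
  shows "ps * (visits \<rho> j * (zeta E \<omega> vs vt ps j * c)) \<le> c * Ez \<omega> \<rho> j"
proof -
  have "zeta E \<omega> vs vt ps j * c \<le> c"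
    using mult_right_mono[OF zeta_le_one assms(2)] by simp
  then have "ps * (visits \<rho> j * (zeta E \<omega> vs vt ps j * c)) \<le> ps * visits \<rho> j * c"
    using visits_eq_0_or_1[of \<rho> j] assms(3) by (auto intro: mult_left_mono)
  also have "\<dots> \<le> Ez \<omega> \<rho> j * c"
    using Ez_ge_visits[OF assms(1), of j] assms(2) by (rule mult_right_mono)
  finally show ?thesis by (simp add: mult.commute)
qed

theorem lemma2:
  fixes V :: nat and E :: "(nat \<times> nat) set" and \<omega> :: "nat \<Rightarrow> nat \<Rightarrow> real"
    and vs vt :: nat and ps lam :: real
    and Orienteering :: "(nat \<Rightarrow> real) \<Rightarrow> nat list"
    and c :: "nat \<Rightarrow> real" and \<rho> :: "nat list"
  assumes graph: "simple_weighted_graph V E \<omega>"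
    and vs: "vs \<in> {1..V}" and vt: "vt \<in> {1..V}"
    and ps: "0 < ps" "ps \<le> 1"
    and nonempty: "\<exists>\<rho>. feasible E \<omega> vs vt ps \<rho>"
    and lam: "lam \<ge> 1"
    and orient: "\<And>\<nu>. (\<forall>j\<in>{1..V}. \<nu> j \<ge> 0) \<Longrightarrow>
        feasible E \<omega> vs vt ps (Orienteering \<nu>) \<and>
        (\<forall>\<rho>. feasible E \<omega> vs vt ps \<rho> \<longrightarrow>
           (\<Sum>j=1..V. visits (Orienteering \<nu>) j * \<nu> j) \<ge> (1 / lam) * (\<Sum>j=1..V. visits \<rho> j * \<nu> j))"
    and c: "\<forall>j\<in>{1..V}. c j > 0"
    and rho: "feasible E \<omega> vs vt ps \<rho>"
  shows "(\<Sum>j=1..V. c j * Ez \<omega> (Orienteering (\<lambda>j. zeta E \<omega> vs vt ps j * c j)) j)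
           \<ge> (ps / lam) * (\<Sum>j=1..V. c j * Ez \<omega> \<rho> j)"
proof -
  define \<nu> where "\<nu> = (\<lambda>j. zeta E \<omega> vs vt ps j * c j)"
  define r where "r = Orienteering \<nu>"
  define reward where "reward \<pi> = (\<Sum>j=1..V. visits \<pi> j * \<nu> j)" for \<pi>
  have "\<forall>j\<in>{1..V}. 0 \<le> \<nu> j"
    using c zeta_nonneg unfolding \<nu>_def by (simp add: less_imp_le)
  then have r: "feasible E \<omega> vs vt ps r" and approx: "reward \<rho> / lam \<le> reward r"
    using orient rho unfolding r_def reward_def by auto
  have upper: "(\<Sum>j=1..V. c j * Ez \<omega> \<rho> j) \<le> reward \<rho>"
    unfolding reward_def \<nu>_def using c
    by (intro sum_mono weighted_Ez_le_visits_zeta[OF rho]) (simp add: less_imp_le)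
  have lower: "ps * reward r \<le> (\<Sum>j=1..V. c j * Ez \<omega> r j)"
    unfolding reward_def \<nu>_def sum_distrib_left using c ps
    by (intro sum_mono visits_zeta_le_weighted_Ez[OF r]) (simp_all add: less_imp_le)
  have "(ps / lam) * (\<Sum>j=1..V. c j * Ez \<omega> \<rho> j) \<le> ps * (reward \<rho> / lam)"
    using upper ps lam by (simp add: mult_left_mono divide_right_mono)
  also have "\<dots> \<le> ps * reward r"
    using approx ps by (intro mult_left_mono) auto
  finally show ?thesis using lower unfolding r_def \<nu>_def by simp
qed

end
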